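(* Let $L\ge2$ and let $X=(X_0,\dots,X_{L-1})^T\sim\mathcal{N}(0,\Sigma_X)$ be a centered Gaussian vector with $\mathbb{E}[X_i^2]=1$ for all $i$. Then for every $0\le\ell\le L-1$ and every $\beta>0$, $\mathbb{E}[X_\ell\, p_{\ell,\beta}(X)]\ge 0$. If moreover the off-diagonal covariance entries satisfy $[\Sigma_X]_{ij}<1$ for all $i\neq j$, then the inequality is strict.
   Context: For $Q\in\mathbb{R}^L$ and $\beta>0$, $p_{\ell,\beta}(Q)=\frac{\exp(\beta Q_\ell)}{\sum_{r=0}^{L-1}\exp(\beta Q_r)}$. *)

theory Defs
  imports "HOL-Probability.Probability"
begin

text \<open>Softmax: p_{l,beta}(Q) = exp(beta Q_l) / sum_{r<L} exp(beta Q_r), for Q in R^L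
  represented as a function nat => real (only indices < L matter).\<close>
definition softmax :: "nat \<Rightarrow> real \<Rightarrow> nat \<Rightarrow> (nat \<Rightarrow> real) \<Rightarrow> real" where
  "softmax L \<beta> l Q = exp (\<beta> * Q l) / (\<Sum>r<L. exp (\<beta> * Q r))"

definition centered_gaussian_vector :: "'a measure \<Rightarrow> nat \<Rightarrow> (nat \<Rightarrow> 'a \<Rightarrow> real) \<Rightarrow> bool" where
  "centered_gaussian_vector M L X \<longleftrightarrow>
     (\<forall>i<L. X i \<in> borel_measurable M) \<and>
     (\<forall>c :: nat \<Rightarrow> real.
        let Y = (\<lambda>\<omega>. \<Sum>i<L. c i * X i \<omega>) in
          (AE \<omega> in M. Y \<omega> = 0) \<or>
          (\<exists>\<sigma>>0. distributed M lborel Y (\<lambda>x. ennreal (normal_density 0 \<sigma> x))))"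

end

(* Fix l and put rho_r = E[X_r X_l], so that rho_l = 1 and rho_r <= 1. Reflecting X along X_l,
   X'_r = X_r - 2 rho_r X_l, gives a centered Gaussian vector with the same covariance, hence (by the
   Cramer-Wold device, itself a consequence of Levy's uniqueness theorem) with the same law as X,
   while X'_l = -X_l. Therefore 2 E[X_l p_l(X)] = E[X_l (p_l(X) - p_l(X'))]. As
   X'_r - X'_l = X_r - X_l + 2 (1 - rho_r) X_l and p_l decreases in the differences X_r - X_l, the
   integrand is nonnegative, and positive where X_l <> 0 as soon as some rho_r < 1; X_l is standard
   normal, so X_l <> 0 almost surely. *)

theory Submission
  imports Defs
begin

section \<open>Finite measures on the real line and their characteristic functions\<close>

lemma char_density_const:
  fixes N :: "real measure"
  assumes "sets N = sets borel" "0 \<le> c"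
  shows "char (density N (\<lambda>_. ennreal c)) t = c * char N t"
proof -
  have "(\<lambda>x. iexp (t * x)) \<in> borel_measurable N"
    unfolding measurable_cong_sets[OF assms(1) refl] by measurable
  then show ?thesis
    using assms(2) by (simp add: char_def integral_density scaleR_conv_of_real)
qed

lemma real_distribution_normalize:
  fixes N :: "real measure"
  assumes "finite_measure N" "sets N = sets borel" "0 < measure N (space N)"
  shows "real_distribution (density N (\<lambda>_. ennreal (1 / measure N (space N))))"
proof -
  interpret finite_measure N by fact
  have "emeasure (density N (\<lambda>_. ennreal (1 / measure N (space N)))) (space N) = 1"
    using assms(3) by (simp add: emeasure_density_const emeasure_eq_measure ennreal_mult[symmetric])
  then show ?thesis
    using assms(2) by (auto simp: real_distribution_def real_distribution_axioms_def intro: prob_spaceI)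
qed

lemma finite_measure_eq_if_char_eq:
  fixes N N' :: "real measure"
  assumes "finite_measure N" "finite_measure N'"
    and sets: "sets N = sets borel" "sets N' = sets borel"
    and char: "char N = char N'"
  shows "N = N'"
proof -
  interpret N: finite_measure N by fact
  interpret N': finite_measure N' by fact
  define m where "m = measure N (space N)"
  have "complex_of_real m = complex_of_real (measure N' (space N'))"
    using fun_cong[OF char, of 0] by (simp add: char_def m_def)
  then have m': "measure N' (space N') = m" by simp
  show ?thesis
  proof (cases "m = 0")
    case True
    then have "emeasure N A = 0" "emeasure N' A = 0" if "A \<in> sets borel" for A
      using that m' N.bounded_measure[of A] N'.bounded_measure[of A] sets
        measure_nonneg[of N A] measure_nonneg[of N' A]
      by (auto simp: N.emeasure_eq_measure N'.emeasure_eq_measure m_def)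
    then show ?thesis using sets by (intro measure_eqI) auto
  next
    case False
    then have m_pos: "0 < m" using measure_nonneg[of N] m_def by (simp add: order_less_le)
    have "density N (\<lambda>_. ennreal (1 / m)) = density N' (\<lambda>_. ennreal (1 / m))"
      using real_distribution_normalize[of N] real_distribution_normalize[of N'] m_pos m' sets
        N.finite_measure_axioms N'.finite_measure_axioms
      by (intro Levy_uniqueness) (auto simp: m_def fun_eq_iff char_density_const char)
    then have "ennreal (1 / m) * emeasure N A = ennreal (1 / m) * emeasure N' A" if "A \<in> sets N" for A
      using that sets by (metis emeasure_density_const)
    then show ?thesis
      using m_pos sets by (intro measure_eqI) (simp_all add: ennreal_mult_cancel_left)
  qed
qed

lemma integral_distr_density:
  fixes f :: "real \<Rightarrow> 'b::{banach, second_countable_topology}"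
  assumes [measurable]: "g \<in> borel_measurable M" "a \<in> borel_measurable M" "f \<in> borel_measurable borel"
    and "\<And>\<omega>. 0 \<le> g \<omega>"
  shows "integral\<^sup>L (distr (density M g) lborel a) f = (\<integral>\<omega>. g \<omega> *\<^sub>R f (a \<omega>) \<partial>M)"
  using assms(4) by (simp add: integral_distr integral_density)

lemma finite_measure_distr_density:
  assumes "a \<in> borel_measurable M" and nonneg: "\<And>\<omega>. 0 \<le> g \<omega>" and integrable: "integrable M g"
  shows "finite_measure (distr (density M g) (lborel :: real measure) a)"
proof (rule finite_measureI)
  have [measurable]: "a \<in> borel_measurable M" "g \<in> borel_measurable M"
    using assms by auto
  have "emeasure (distr (density M g) lborel a) (space (distr (density M g) lborel a))
      = (\<integral>\<^sup>+\<omega>. ennreal (g \<omega>) \<partial>M)"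
    by (simp add: emeasure_distr emeasure_density)
  also have "\<dots> = ennreal (\<integral>\<omega>. g \<omega> \<partial>M)"
    using nonneg integrable by (simp add: nn_integral_eq_integral)
  finally show "emeasure (distr (density M g) lborel a) (space (distr (density M g) lborel a)) \<noteq> \<infinity>"
    by simp
qed

lemma integral_indicator_eq_if_weighted_char_eq_nonneg:
  fixes g h a b :: "'a \<Rightarrow> real"
  assumes [measurable]: "g \<in> borel_measurable M" "h \<in> borel_measurable M"
      "a \<in> borel_measurable M" "b \<in> borel_measurable M"
    and nonneg: "\<And>\<omega>. 0 \<le> g \<omega>" "\<And>\<omega>. 0 \<le> h \<omega>"
    and integrable: "integrable M g" "integrable M h"
    and char: "\<And>t. (CLINT \<omega>|M. g \<omega> * iexp (t * a \<omega>)) = (CLINT \<omega>|M. h \<omega> * iexp (t * b \<omega>))"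
    and B: "B \<in> sets borel"
  shows "(LINT \<omega>|M. g \<omega> * indicator B (a \<omega>)) = (LINT \<omega>|M. h \<omega> * indicator B (b \<omega>))"
proof -
  have "distr (density M g) lborel a = distr (density M h) lborel b"
  proof (rule finite_measure_eq_if_char_eq)
    show "char (distr (density M g) lborel a) = char (distr (density M h) lborel b)"
      using char nonneg by (simp add: char_def integral_distr_density scaleR_conv_of_real fun_eq_iff)
    show "finite_measure (distr (density M g) lborel a)" "finite_measure (distr (density M h) lborel b)"
      using nonneg integrable by (auto intro: finite_measure_distr_density)
  qed simp_all
  then show ?thesis
    using integral_distr_density[of g M a "indicator B :: real \<Rightarrow> real"]
      integral_distr_density[of h M b "indicator B :: real \<Rightarrow> real"] nonneg B
    by simp
qed

lemma (in finite_measure) integrable_bounded_mult_iexp: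
  fixes H :: "'a \<Rightarrow> complex"
  assumes [measurable]: "H \<in> borel_measurable M" "a \<in> borel_measurable M"
    and bounded: "\<And>\<omega>. cmod (H \<omega>) \<le> C"
  shows "integrable M (\<lambda>\<omega>. H \<omega> * iexp (t * a \<omega>))"
  by (intro integrable_const_bound[where B = C]) (auto simp: norm_mult bounded)

lemma (in finite_measure) integral_Re_mult_iexp:
  fixes H :: "'a \<Rightarrow> complex"
  assumes [measurable]: "H \<in> borel_measurable M" "a \<in> borel_measurable M"
    and bounded: "\<And>\<omega>. cmod (H \<omega>) \<le> C"
  shows "(CLINT \<omega>|M. Re (H \<omega>) * iexp (t * a \<omega>))
       = ((CLINT \<omega>|M. H \<omega> * iexp (t * a \<omega>)) + cnj (CLINT \<omega>|M. H \<omega> * iexp (- t * a \<omega>))) / 2"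
proof -
  have Re_eq: "Re (H \<omega>) * iexp (t * a \<omega>) = (H \<omega> * iexp (t * a \<omega>) + cnj (H \<omega> * iexp (- t * a \<omega>))) / 2" for \<omega>
  proof -
    have "cnj (H \<omega> * iexp (- t * a \<omega>)) = cnj (H \<omega>) * iexp (t * a \<omega>)"
      by (simp add: exp_cnj)
    then show ?thesis
      by (simp only: distrib_right[symmetric] complex_add_cnj) simp
  qed
  show ?thesis
    unfolding Re_eq integral_divide_zero
      Bochner_Integration.integral_add[OF integrable_bounded_mult_iexp[OF assms]
        integrable_cnj[OF integrable_bounded_mult_iexp[OF assms]]] Bochner_Integration.integral_cnj ..
qed

lemma integral_comp_eq_if_distr_eq:
  fixes f :: "'b \<Rightarrow> 'c::{banach, second_countable_topology}"
  assumes "distr M N a = distr M N b" "a \<in> measurable M N" "b \<in> measurable M N"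
    and "f \<in> borel_measurable N"
  shows "(\<integral>\<omega>. f (a \<omega>) \<partial>M) = (\<integral>\<omega>. f (b \<omega>) \<partial>M)"
  using assms by (metis integral_distr)

lemma (in finite_measure) integral_indicator_eq_if_weighted_char_eq:
  fixes g h a b :: "'a \<Rightarrow> real"
  assumes g [measurable]: "g \<in> borel_measurable M" and h [measurable]: "h \<in> borel_measurable M"
    and a [measurable]: "a \<in> borel_measurable M" and b [measurable]: "b \<in> borel_measurable M"
    and law: "distr M lborel a = distr M lborel b"
    and bounded: "\<And>\<omega>. \<bar>g \<omega>\<bar> \<le> C" "\<And>\<omega>. \<bar>h \<omega>\<bar> \<le> C"
    and char: "\<And>t. (CLINT \<omega>|M. g \<omega> * iexp (t * a \<omega>)) = (CLINT \<omega>|M. h \<omega> * iexp (t * b \<omega>))"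
    and B: "B \<in> sets borel"
  shows "(LINT \<omega>|M. g \<omega> * indicator B (a \<omega>)) = (LINT \<omega>|M. h \<omega> * indicator B (b \<omega>))"
proof -
  \<comment> \<open>Shifting the weights by \<open>C\<close> makes them nonnegative; the shift is harmless since
    \<open>a\<close> and \<open>b\<close> have the same law.\<close>
  have shift: "(CLINT \<omega>|M. (w \<omega> + C) * iexp (t * c \<omega>))
        = (CLINT \<omega>|M. w \<omega> * iexp (t * c \<omega>)) + C * (CLINT \<omega>|M. iexp (t * c \<omega>))"
    "(LINT \<omega>|M. (w \<omega> + C) * indicator B (c \<omega>))
        = (LINT \<omega>|M. w \<omega> * indicator B (c \<omega>)) + C * (LINT \<omega>|M. indicator B (c \<omega>))"
    if [measurable]: "w \<in> borel_measurable M" "c \<in> borel_measurable M"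
      and "\<And>\<omega>. \<bar>w \<omega>\<bar> \<le> C" for w c t
  proof -
    have "integrable M (\<lambda>\<omega>. w \<omega> * iexp (t * c \<omega>))" "integrable M (\<lambda>\<omega>. iexp (t * c \<omega>))"
      using that(3) integrable_bounded_mult_iexp[of "\<lambda>\<omega>. complex_of_real (w \<omega>)" c C t]
        integrable_bounded_mult_iexp[of "\<lambda>_. 1" c 1 t] by simp_all
    then show "(CLINT \<omega>|M. (w \<omega> + C) * iexp (t * c \<omega>))
        = (CLINT \<omega>|M. w \<omega> * iexp (t * c \<omega>)) + C * (CLINT \<omega>|M. iexp (t * c \<omega>))"
      by (simp add: distrib_right)
    have "integrable M (\<lambda>\<omega>. w \<omega> * indicator B (c \<omega>))"
      using that(3) B order_trans[OF abs_ge_zero that(3)]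
      by (intro integrable_const_bound[where B = C]) (auto simp: indicator_def)
    moreover have "integrable M (\<lambda>\<omega>. indicator B (c \<omega>) :: real)"
      using B by (intro integrable_const_bound[where B = 1]) (auto simp: indicator_def)
    ultimately show "(LINT \<omega>|M. (w \<omega> + C) * indicator B (c \<omega>))
        = (LINT \<omega>|M. w \<omega> * indicator B (c \<omega>)) + C * (LINT \<omega>|M. indicator B (c \<omega>))"
      by (simp add: distrib_right)
  qed
  have "(LINT \<omega>|M. (g \<omega> + C) * indicator B (a \<omega>)) = (LINT \<omega>|M. (h \<omega> + C) * indicator B (b \<omega>))"
  proof (rule integral_indicator_eq_if_weighted_char_eq_nonneg[OF _ _ _ _ _ _ _ _ _ B])
    show "0 \<le> g \<omega> + C" "0 \<le> h \<omega> + C" for \<omega>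
      using bounded[of \<omega>] unfolding abs_le_iff by linarith+
    have "norm (g \<omega> + C) \<le> 2 * C" "norm (h \<omega> + C) \<le> 2 * C" for \<omega>
      using bounded[of \<omega>] unfolding real_norm_def abs_le_iff by linarith+
    then show "integrable M (\<lambda>\<omega>. g \<omega> + C)" "integrable M (\<lambda>\<omega>. h \<omega> + C)"
      by (auto intro!: integrable_const_bound[where B = "2 * C"])
    have "(CLINT \<omega>|M. iexp (t * a \<omega>)) = (CLINT \<omega>|M. iexp (t * b \<omega>))" for t
      by (rule integral_comp_eq_if_distr_eq[OF law, where f = "\<lambda>x. iexp (t * x)"]) simp_all
    then show "(CLINT \<omega>|M. (g \<omega> + C) * iexp (t * a \<omega>)) = (CLINT \<omega>|M. (h \<omega> + C) * iexp (t * b \<omega>))" for t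
      unfolding shift(1)[OF g a bounded(1)] shift(1)[OF h b bounded(2)] char by simp
  qed simp_all
  moreover have "(LINT \<omega>|M. indicator B (a \<omega>) :: real) = (LINT \<omega>|M. indicator B (b \<omega>))"
    by (rule integral_comp_eq_if_distr_eq[OF law]) (use B in simp_all)
  ultimately show ?thesis
    unfolding shift(2)[OF g a bounded(1)] shift(2)[OF h b bounded(2)] by simp
qed

lemma (in finite_measure) complex_integral_indicator_eq_if_weighted_char_eq:
  fixes HU HV :: "'a \<Rightarrow> complex"
  assumes HU [measurable]: "HU \<in> borel_measurable M" and HV [measurable]: "HV \<in> borel_measurable M"
    and a [measurable]: "a \<in> borel_measurable M" and b [measurable]: "b \<in> borel_measurable M"
    and law: "distr M lborel a = distr M lborel b"
    and bounded: "\<And>\<omega>. cmod (HU \<omega>) \<le> C" "\<And>\<omega>. cmod (HV \<omega>) \<le> C"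
    and char: "\<And>t. (CLINT \<omega>|M. HU \<omega> * iexp (t * a \<omega>)) = (CLINT \<omega>|M. HV \<omega> * iexp (t * b \<omega>))"
    and B: "B \<in> sets borel"
  shows "(CLINT \<omega>|M. HU \<omega> * indicator B (a \<omega>)) = (CLINT \<omega>|M. HV \<omega> * indicator B (b \<omega>))"
proof -
  have integrable: "integrable M (\<lambda>\<omega>. H \<omega> * indicator B (c \<omega>))"
    if [measurable]: "H \<in> borel_measurable M" "c \<in> borel_measurable M"
      and "\<And>\<omega>. cmod (H \<omega>) \<le> C" for H c
    using that(3) B order_trans[OF norm_ge_zero that(3)]
    by (intro integrable_const_bound[where B = C]) (auto simp: indicator_def)
  have Re: "(LINT \<omega>|M. Re (H \<omega>) * indicator B (a \<omega>)) = (LINT \<omega>|M. Re (H' \<omega>) * indicator B (b \<omega>))"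
    if [measurable]: "H \<in> borel_measurable M" "H' \<in> borel_measurable M"
      and bounded: "\<And>\<omega>. cmod (H \<omega>) \<le> C" "\<And>\<omega>. cmod (H' \<omega>) \<le> C"
      and char: "\<And>t. (CLINT \<omega>|M. H \<omega> * iexp (t * a \<omega>)) = (CLINT \<omega>|M. H' \<omega> * iexp (t * b \<omega>))" for H H'
  proof (rule integral_indicator_eq_if_weighted_char_eq[OF _ _ a b law _ _ _ B])
    show "\<bar>Re (H \<omega>)\<bar> \<le> C" "\<bar>Re (H' \<omega>)\<bar> \<le> C" for \<omega>
      using abs_Re_le_cmod bounded order_trans by blast+
    show "(CLINT \<omega>|M. Re (H \<omega>) * iexp (t * a \<omega>)) = (CLINT \<omega>|M. Re (H' \<omega>) * iexp (t * b \<omega>))" for t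
      unfolding integral_Re_mult_iexp[OF that(1) a bounded(1)] integral_Re_mult_iexp[OF that(2) b bounded(2)] char ..
  qed simp_all
  \<comment> \<open>The imaginary part is the real part of \<open>- \<i> * H\<close>.\<close>
  have Im: "(LINT \<omega>|M. Im (HU \<omega>) * indicator B (a \<omega>)) = (LINT \<omega>|M. Im (HV \<omega>) * indicator B (b \<omega>))"
    using Re[of "\<lambda>\<omega>. - \<i> * HU \<omega>" "\<lambda>\<omega>. - \<i> * HV \<omega>"] bounded char by (simp add: norm_mult mult.assoc)
  have Re_Im_indicator: "Re (z * indicator B x) = Re z * indicator B x" "Im (z * indicator B x) = Im z * indicator B x"
    for z and x :: real
    by (simp_all add: indicator_def)
  show ?thesis
  proof (rule complex_eqI)
    show "Re (CLINT \<omega>|M. HU \<omega> * indicator B (a \<omega>)) = Re (CLINT \<omega>|M. HV \<omega> * indicator B (b \<omega>))"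
      using Re[OF HU HV bounded char] by (simp only: integral_Re[OF integrable[OF HU a bounded(1)], symmetric]
        integral_Re[OF integrable[OF HV b bounded(2)], symmetric] Re_Im_indicator)
    show "Im (CLINT \<omega>|M. HU \<omega> * indicator B (a \<omega>)) = Im (CLINT \<omega>|M. HV \<omega> * indicator B (b \<omega>))"
      using Im by (simp only: integral_Im[OF integrable[OF HU a bounded(1)], symmetric]
        integral_Im[OF integrable[OF HV b bounded(2)], symmetric] Re_Im_indicator)
  qed
qed

section \<open>The Cramer--Wold device\<close>

lemma sum_delta_mult:
  fixes x :: "nat \<Rightarrow> 'a::semiring_1"
  shows "k < n \<Longrightarrow> (\<Sum>i<n. (if i = k then 1 else 0) * x i) = x k"
  by (simp add: if_distrib[of "\<lambda>y. y * _"] cong: if_cong)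

text \<open>Coordinates below \<open>k\<close> are tested against indicators, the others against a Fourier character.
  The induction step trades the character of coordinate \<open>k\<close> for an indicator, all other factors
  forming a bounded weight.\<close>

lemma (in finite_measure) integral_prod_indicator_iexp_eq_if_lincomb_distr_eq:
  fixes U V :: "nat \<Rightarrow> 'a \<Rightarrow> real"
  assumes U: "\<And>i. i < n \<Longrightarrow> U i \<in> borel_measurable M"
    and V: "\<And>i. i < n \<Longrightarrow> V i \<in> borel_measurable M"
    and lincomb: "\<And>c. distr M lborel (\<lambda>\<omega>. \<Sum>i<n. c i * U i \<omega>) = distr M lborel (\<lambda>\<omega>. \<Sum>i<n. c i * V i \<omega>)"
    and A: "\<And>j. j < n \<Longrightarrow> A j \<in> sets borel"
  shows "k \<le> n \<Longrightarrow>
    (CLINT \<omega>|M. (\<Prod>j<k. indicator (A j) (U j \<omega>) :: real) * iexp (\<Sum>j\<in>{k..<n}. s j * U j \<omega>))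
  = (CLINT \<omega>|M. (\<Prod>j<k. indicator (A j) (V j \<omega>) :: real) * iexp (\<Sum>j\<in>{k..<n}. s j * V j \<omega>))"
proof (induction k arbitrary: s)
  case 0
  have "(\<lambda>\<omega>. \<Sum>i<n. s i * W i \<omega>) \<in> borel_measurable M"
    if "\<And>i. i < n \<Longrightarrow> W i \<in> borel_measurable M" for W
    using that by measurable
  then show ?case
    using integral_comp_eq_if_distr_eq[OF lincomb[of s], where f = "\<lambda>x. iexp x"] U V
    by (simp add: atLeast0LessThan)
next
  case (Suc k)
  have k: "k < n" using Suc.prems by simp
  define H where "H W \<omega> = (\<Prod>j<k. indicator (A j) (W j \<omega>) :: real) * iexp (\<Sum>j\<in>{Suc k..<n}. s j * W j \<omega>)"
    for W :: "nat \<Rightarrow> 'a \<Rightarrow> real" and \<omega>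
  have H_measurable: "H W \<in> borel_measurable M" if "\<And>i. i < n \<Longrightarrow> W i \<in> borel_measurable M" for W
  proof -
    have [measurable]: "(\<lambda>\<omega>. \<Sum>j\<in>{Suc k..<n}. s j * W j \<omega>) \<in> borel_measurable M"
      using that by (intro borel_measurable_sum) auto
    have [measurable]: "(\<lambda>\<omega>. \<Prod>j<k. indicator (A j) (W j \<omega>) :: real) \<in> borel_measurable M"
      using that k A by (intro borel_measurable_prod) (auto intro: measurable_compose[OF _ borel_measurable_indicator])
    show ?thesis
      unfolding H_def by measurable
  qed
  have H_bounded: "cmod (H W \<omega>) \<le> 1" for W \<omega>
    unfolding H_def norm_mult norm_of_real abs_prod by (auto simp: indicator_def intro!: prod_le_1)
  have sum_split: "(\<Sum>j\<in>{k..<n}. (s(k := t)) j * W j \<omega>) = t * W k \<omega> + (\<Sum>j\<in>{Suc k..<n}. s j * W j \<omega>)"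
    for W :: "nat \<Rightarrow> 'a \<Rightarrow> real" and \<omega> t
    using k by (simp add: sum.atLeast_Suc_lessThan)
  have "(CLINT \<omega>|M. H U \<omega> * iexp (t * U k \<omega>)) = (CLINT \<omega>|M. H V \<omega> * iexp (t * V k \<omega>))" for t
    using Suc.IH[of "s(k := t)"] Suc.prems unfolding H_def sum_split
    by (simp add: distrib_left exp_add mult_ac)
  moreover have "distr M lborel (U k) = distr M lborel (V k)"
    using lincomb[of "\<lambda>i. if i = k then 1 else 0"] k by (simp add: sum_delta_mult)
  ultimately have "(CLINT \<omega>|M. H U \<omega> * indicator (A k) (U k \<omega>)) = (CLINT \<omega>|M. H V \<omega> * indicator (A k) (V k \<omega>))"
    using k U V A H_measurable H_bounded
    by (intro complex_integral_indicator_eq_if_weighted_char_eq[where C = 1]) auto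
  moreover have "complex_of_real (\<Prod>j<Suc k. indicator (A j) (W j \<omega>)) * iexp (\<Sum>j\<in>{Suc k..<n}. s j * W j \<omega>)
      = H W \<omega> * indicator (A k) (W k \<omega>)" for W \<omega>
    unfolding H_def prod.lessThan_Suc of_real_mult by (simp add: indicator_def mult_ac del: of_real_prod)
  ultimately show ?case
    by simp
qed

theorem (in finite_measure) cramer_wold:
  fixes U V :: "nat \<Rightarrow> 'a \<Rightarrow> real"
  assumes U: "\<And>i. i < n \<Longrightarrow> U i \<in> borel_measurable M"
    and V: "\<And>i. i < n \<Longrightarrow> V i \<in> borel_measurable M"
    and lincomb: "\<And>c. distr M lborel (\<lambda>\<omega>. \<Sum>i<n. c i * U i \<omega>) = distr M lborel (\<lambda>\<omega>. \<Sum>i<n. c i * V i \<omega>)"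
  shows "distr M (\<Pi>\<^sub>M i\<in>{..<n}. lborel) (\<lambda>\<omega>. \<lambda>i\<in>{..<n}. U i \<omega>)
       = distr M (\<Pi>\<^sub>M i\<in>{..<n}. lborel) (\<lambda>\<omega>. \<lambda>i\<in>{..<n}. V i \<omega>)"
proof -
  have vector_measurable: "(\<lambda>\<omega>. \<lambda>i\<in>{..<n}. W i \<omega>) \<in> M \<rightarrow>\<^sub>M (\<Pi>\<^sub>M i\<in>{..<n}. lborel)"
    if "\<And>i. i < n \<Longrightarrow> W i \<in> borel_measurable M" for W :: "nat \<Rightarrow> 'a \<Rightarrow> real"
    using that by (intro measurable_restrict) auto
  have box: "measure (distr M (\<Pi>\<^sub>M i\<in>{..<n}. lborel) (\<lambda>\<omega>. \<lambda>i\<in>{..<n}. W i \<omega>)) (Pi\<^sub>E {..<n} A)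
      = (LINT \<omega>|M. (\<Prod>j<n. indicator (A j) (W j \<omega>) :: real))"
    if W: "\<And>i. i < n \<Longrightarrow> W i \<in> borel_measurable M" and A: "\<And>i. i \<in> {..<n} \<Longrightarrow> A i \<in> sets lborel"
    for W :: "nat \<Rightarrow> 'a \<Rightarrow> real" and A
  proof -
    have S: "Pi\<^sub>E {..<n} A \<in> sets (\<Pi>\<^sub>M i\<in>{..<n}. lborel)"
      using A by (intro sets_PiM_I_finite) auto
    have "(\<Prod>j<n. indicator (A j) (W j \<omega>)) = (indicator (Pi\<^sub>E {..<n} A) (\<lambda>i\<in>{..<n}. W i \<omega>) :: real)" for \<omega>
      by (auto simp: indicator_def PiE_iff)
    then show ?thesis
      using S integral_distr[OF vector_measurable[of W, OF W], where f = "indicator (Pi\<^sub>E {..<n} A) :: _ \<Rightarrow> real"]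
        finite_measure.emeasure_finite[OF finite_measure_distr[OF vector_measurable[of W, OF W]]]
      by (simp add: top.not_eq_extremum)
  qed
  show ?thesis
  proof (rule measure_eqI_PiM_finite[where A = "\<lambda>_. space (\<Pi>\<^sub>M i\<in>{..<n}. lborel)"])
    fix A :: "nat \<Rightarrow> real set" assume A: "\<And>i. i \<in> {..<n} \<Longrightarrow> A i \<in> sets lborel"
    interpret DU: finite_measure "distr M (\<Pi>\<^sub>M i\<in>{..<n}. lborel) (\<lambda>\<omega>. \<lambda>i\<in>{..<n}. U i \<omega>)"
      by (rule finite_measure_distr[OF vector_measurable[OF U]])
    interpret DV: finite_measure "distr M (\<Pi>\<^sub>M i\<in>{..<n}. lborel) (\<lambda>\<omega>. \<lambda>i\<in>{..<n}. V i \<omega>)"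
      by (rule finite_measure_distr[OF vector_measurable[OF V]])
    have "(CLINT \<omega>|M. (\<Prod>j<n. indicator (A j) (U j \<omega>) :: real) * iexp (\<Sum>j\<in>{n..<n}. 0 * U j \<omega>))
        = (CLINT \<omega>|M. (\<Prod>j<n. indicator (A j) (V j \<omega>) :: real) * iexp (\<Sum>j\<in>{n..<n}. 0 * V j \<omega>))"
      using A by (intro integral_prod_indicator_iexp_eq_if_lincomb_distr_eq[OF U V lincomb]) auto
    then have "(LINT \<omega>|M. (\<Prod>j<n. indicator (A j) (U j \<omega>) :: real)) = (LINT \<omega>|M. (\<Prod>j<n. indicator (A j) (V j \<omega>)))"
      by (simp del: of_real_prod)
    then show "emeasure (distr M (\<Pi>\<^sub>M i\<in>{..<n}. lborel) (\<lambda>\<omega>. \<lambda>i\<in>{..<n}. U i \<omega>)) (Pi\<^sub>E {..<n} A)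
        = emeasure (distr M (\<Pi>\<^sub>M i\<in>{..<n}. lborel) (\<lambda>\<omega>. \<lambda>i\<in>{..<n}. V i \<omega>)) (Pi\<^sub>E {..<n} A)"
      using box[of U A, OF U A] box[of V A, OF V A]
      by (simp add: DU.emeasure_eq_measure DV.emeasure_eq_measure)
  next
    show "range (\<lambda>_. space (\<Pi>\<^sub>M i\<in>{..<n}. lborel)) \<subseteq> prod_algebra {..<n} (\<lambda>_. lborel)"
      by (auto simp: space_PiM intro!: prod_algebraI_finite)
    show "emeasure (distr M (\<Pi>\<^sub>M i\<in>{..<n}. lborel) (\<lambda>\<omega>. \<lambda>i\<in>{..<n}. U i \<omega>)) (space (\<Pi>\<^sub>M i\<in>{..<n}. lborel)) \<noteq> \<infinity>"
      using finite_measure.emeasure_finite[OF finite_measure_distr[OF vector_measurable[OF U]]] by simp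
  qed simp_all
qed

section \<open>Centered Gaussian vectors\<close>

definition centered_normal_or_zero :: "'a measure \<Rightarrow> ('a \<Rightarrow> real) \<Rightarrow> bool" where
  "centered_normal_or_zero M Y \<longleftrightarrow> Y \<in> borel_measurable M \<and>
     ((AE \<omega> in M. Y \<omega> = 0) \<or> (\<exists>\<sigma>>0. distributed M lborel Y (\<lambda>x. ennreal (normal_density 0 \<sigma> x))))"

lemma (in prob_space) normal_distributed_second_moment:
  assumes "0 < \<sigma>" and D: "distributed M lborel Y (\<lambda>x. ennreal (normal_density 0 \<sigma> x))"
  shows "integrable M (\<lambda>\<omega>. (Y \<omega>)\<^sup>2)" and "expectation (\<lambda>\<omega>. (Y \<omega>)\<^sup>2) = \<sigma>\<^sup>2"
proof -
  have "integrable lborel (\<lambda>x. normal_density 0 \<sigma> x * x\<^sup>2)"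
    using integrable_normal_moment[of \<sigma> 0 2, OF assms(1)] by (simp only: diff_zero)
  then show "integrable M (\<lambda>\<omega>. (Y \<omega>)\<^sup>2)"
    using distributed_integrable[OF D, of "\<lambda>x. x\<^sup>2"] by simp
  show "expectation (\<lambda>\<omega>. (Y \<omega>)\<^sup>2) = \<sigma>\<^sup>2"
    using normal_distributed_variance[OF assms] normal_distributed_expectation[OF assms] by simp
qed

lemma (in prob_space) centered_normal_or_zero_integrable_square:
  assumes "centered_normal_or_zero M Y"
  shows "integrable M (\<lambda>\<omega>. (Y \<omega>)\<^sup>2)"
proof -
  have [measurable]: "Y \<in> borel_measurable M"
    using assms unfolding centered_normal_or_zero_def by simp
  consider "AE \<omega> in M. Y \<omega> = 0" | \<sigma> where "\<sigma> > 0" "distributed M lborel Y (\<lambda>x. ennreal (normal_density 0 \<sigma> x))"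
    using assms unfolding centered_normal_or_zero_def by blast
  then show ?thesis
  proof cases
    case 1
    then have "AE \<omega> in M. (Y \<omega>)\<^sup>2 = 0"
      by (rule eventually_mono) simp
    then show ?thesis
      by (subst integrable_cong_AE[where g = "\<lambda>_. 0"]) simp_all
  next
    case 2
    then show ?thesis by (rule normal_distributed_second_moment(1))
  qed
qed

lemma (in prob_space) centered_normal_or_zero_cases:
  assumes "centered_normal_or_zero M Y"
  obtains "expectation (\<lambda>\<omega>. (Y \<omega>)\<^sup>2) = 0" "AE \<omega> in M. Y \<omega> = 0"
  | "expectation (\<lambda>\<omega>. (Y \<omega>)\<^sup>2) > 0"
    "distributed M lborel Y (\<lambda>x. ennreal (normal_density 0 (sqrt (expectation (\<lambda>\<omega>. (Y \<omega>)\<^sup>2))) x))"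
proof -
  consider "AE \<omega> in M. Y \<omega> = 0" | \<sigma> where "\<sigma> > 0" "distributed M lborel Y (\<lambda>x. ennreal (normal_density 0 \<sigma> x))"
    using assms unfolding centered_normal_or_zero_def by blast
  then show thesis
  proof cases
    case 1
    then have "expectation (\<lambda>\<omega>. (Y \<omega>)\<^sup>2) = 0"
      by (intro integral_eq_zero_AE) (auto elim: eventually_mono)
    then show thesis using 1 that(1) by blast
  next
    case 2
    then show thesis
      using that(2) normal_distributed_second_moment(2)[OF 2] by simp
  qed
qed

lemma (in prob_space) centered_normal_or_zero_distr_eq:
  assumes Y: "centered_normal_or_zero M Y" and Z: "centered_normal_or_zero M Z"
    and second_moment: "expectation (\<lambda>\<omega>. (Y \<omega>)\<^sup>2) = expectation (\<lambda>\<omega>. (Z \<omega>)\<^sup>2)"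
  shows "distr M lborel Y = distr M lborel Z"
proof -
  have [measurable]: "Y \<in> borel_measurable M" "Z \<in> borel_measurable M"
    using Y Z unfolding centered_normal_or_zero_def by auto
  show ?thesis
  proof (cases rule: centered_normal_or_zero_cases[OF Y]; cases rule: centered_normal_or_zero_cases[OF Z])
    assume "AE \<omega> in M. Y \<omega> = 0" "AE \<omega> in M. Z \<omega> = 0"
    then have "AE \<omega> in M. Y \<omega> = Z \<omega>"
      by eventually_elim simp
    then show ?thesis
      by (intro distr_cong_AE) simp_all
  next
    assume "distributed M lborel Y (\<lambda>x. ennreal (normal_density 0 (sqrt (expectation (\<lambda>\<omega>. (Y \<omega>)\<^sup>2))) x))"
      "distributed M lborel Z (\<lambda>x. ennreal (normal_density 0 (sqrt (expectation (\<lambda>\<omega>. (Z \<omega>)\<^sup>2))) x))"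
    then show ?thesis
      using second_moment by (simp add: distributed_distr_eq_density)
  qed (use second_moment in simp_all)
qed

lemma (in prob_space) centered_normal_or_zero_AE_nonzero:
  assumes "centered_normal_or_zero M Y" and "expectation (\<lambda>\<omega>. (Y \<omega>)\<^sup>2) \<noteq> 0"
  shows "AE \<omega> in M. Y \<omega> \<noteq> 0"
proof (cases rule: centered_normal_or_zero_cases[OF assms(1)])
  case 2
  have [measurable]: "Y \<in> borel_measurable M"
    using assms(1) unfolding centered_normal_or_zero_def by auto
  have "AE x in density lborel (\<lambda>x. ennreal (normal_density 0 (sqrt (expectation (\<lambda>\<omega>. (Y \<omega>)\<^sup>2))) x)). x \<noteq> 0"
    using AE_lborel_singleton[of 0] by (subst AE_density) (auto elim: eventually_mono)
  then have "AE x in distr M lborel Y. x \<noteq> 0"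
    unfolding distributed_distr_eq_density[OF 2(2)] .
  then show ?thesis
    by (rule AE_distrD[rotated]) simp
qed (use assms(2) in simp)

lemma centered_gaussian_vector_measurable:
  "centered_gaussian_vector M L X \<Longrightarrow> i < L \<Longrightarrow> X i \<in> borel_measurable M"
  unfolding centered_gaussian_vector_def by simp

lemma centered_gaussian_vector_lincomb:
  assumes "centered_gaussian_vector M L X"
  shows "centered_normal_or_zero M (\<lambda>\<omega>. \<Sum>i<L. c i * X i \<omega>)"
proof -
  have "(\<lambda>\<omega>. \<Sum>i<L. c i * X i \<omega>) \<in> borel_measurable M"
    using centered_gaussian_vector_measurable[OF assms] by (intro borel_measurable_sum) auto
  then show ?thesis
    using assms unfolding centered_gaussian_vector_def centered_normal_or_zero_def Let_def by blast
qed

lemma centered_gaussian_vector_component: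
  assumes "centered_gaussian_vector M L X" "i < L"
  shows "centered_normal_or_zero M (X i)"
proof -
  have "(\<lambda>\<omega>. \<Sum>j<L. (if j = i then 1 else 0) * X j \<omega>) = X i"
    using assms(2) by (simp add: sum_delta_mult)
  then show ?thesis
    using centered_gaussian_vector_lincomb[OF assms(1), of "\<lambda>j. if j = i then 1 else 0"] by simp
qed

lemma integrable_mult_if_square_integrable:
  fixes Y Z :: "'a \<Rightarrow> real"
  assumes [measurable]: "Y \<in> borel_measurable M" "Z \<in> borel_measurable M"
    and "integrable M (\<lambda>\<omega>. (Y \<omega>)\<^sup>2)" "integrable M (\<lambda>\<omega>. (Z \<omega>)\<^sup>2)"
  shows "integrable M (\<lambda>\<omega>. Y \<omega> * Z \<omega>)"
proof (rule Bochner_Integration.integrable_bound[where f = "\<lambda>\<omega>. (Y \<omega>)\<^sup>2 + (Z \<omega>)\<^sup>2"])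
  show "integrable M (\<lambda>\<omega>. (Y \<omega>)\<^sup>2 + (Z \<omega>)\<^sup>2)"
    using assms(3,4) by simp
  show "AE \<omega> in M. norm (Y \<omega> * Z \<omega>) \<le> norm ((Y \<omega>)\<^sup>2 + (Z \<omega>)\<^sup>2)"
  proof (rule AE_I2)
    fix \<omega>
    have "2 * \<bar>Y \<omega> * Z \<omega>\<bar> \<le> (Y \<omega>)\<^sup>2 + (Z \<omega>)\<^sup>2"
      using sum_squares_bound[of "\<bar>Y \<omega>\<bar>" "\<bar>Z \<omega>\<bar>"] by (simp add: abs_mult)
    then show "norm (Y \<omega> * Z \<omega>) \<le> norm ((Y \<omega>)\<^sup>2 + (Z \<omega>)\<^sup>2)"
      by simp
  qed
qed simp

lemma (in prob_space) expectation_mult_le_average_squares: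
  fixes Y Z :: "'a \<Rightarrow> real"
  assumes [measurable]: "Y \<in> borel_measurable M" "Z \<in> borel_measurable M"
    and "integrable M (\<lambda>\<omega>. (Y \<omega>)\<^sup>2)" "integrable M (\<lambda>\<omega>. (Z \<omega>)\<^sup>2)"
  shows "expectation (\<lambda>\<omega>. Y \<omega> * Z \<omega>) \<le> (expectation (\<lambda>\<omega>. (Y \<omega>)\<^sup>2) + expectation (\<lambda>\<omega>. (Z \<omega>)\<^sup>2)) / 2"
proof -
  have "Y \<omega> * Z \<omega> \<le> ((Y \<omega>)\<^sup>2 + (Z \<omega>)\<^sup>2) / 2" for \<omega>
    using sum_squares_bound[of "Y \<omega>" "Z \<omega>"] by simp
  then have "expectation (\<lambda>\<omega>. Y \<omega> * Z \<omega>) \<le> expectation (\<lambda>\<omega>. ((Y \<omega>)\<^sup>2 + (Z \<omega>)\<^sup>2) / 2)"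
    using assms integrable_mult_if_square_integrable[OF assms] by (intro integral_mono) auto
  also have "\<dots> = (expectation (\<lambda>\<omega>. (Y \<omega>)\<^sup>2) + expectation (\<lambda>\<omega>. (Z \<omega>)\<^sup>2)) / 2"
    using assms by simp
  finally show ?thesis .
qed

lemma (in prob_space) expectation_pos_if_AE_pos:
  fixes f :: "'a \<Rightarrow> real"
  assumes "integrable M f" "\<And>\<omega>. 0 \<le> f \<omega>" "AE \<omega> in M. 0 < f \<omega>"
  shows "0 < expectation f"
proof -
  have "expectation f \<noteq> 0"
  proof
    assume "expectation f = 0"
    then have "AE \<omega> in M. f \<omega> = 0"
      using integral_nonneg_eq_0_iff_AE[OF assms(1)] assms(2) by simp
    with assms(3) have "AE \<omega> in M. False"
      by eventually_elim simp
    then show False by simp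
  qed
  moreover have "0 \<le> expectation f"
    using assms(2) by (intro Bochner_Integration.integral_nonneg)
  ultimately show ?thesis
    by simp
qed

lemma (in prob_space) centered_gaussian_vector_integrable_mult:
  assumes "centered_gaussian_vector M L X" "i < L" "j < L"
  shows "integrable M (\<lambda>\<omega>. X i \<omega> * X j \<omega>)"
  by (intro integrable_mult_if_square_integrable centered_normal_or_zero_integrable_square
      centered_gaussian_vector_component[OF assms(1)] centered_gaussian_vector_measurable[OF assms(1)]
      assms(2,3))

lemma (in prob_space) expectation_lincomb_square:
  fixes X :: "nat \<Rightarrow> 'a \<Rightarrow> real"
  assumes "\<And>i j. i < n \<Longrightarrow> j < n \<Longrightarrow> integrable M (\<lambda>\<omega>. X i \<omega> * X j \<omega>)"
  shows "expectation (\<lambda>\<omega>. (\<Sum>i<n. c i * X i \<omega>)\<^sup>2)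
       = (\<Sum>i<n. \<Sum>j<n. c i * c j * expectation (\<lambda>\<omega>. X i \<omega> * X j \<omega>))"
proof -
  have square: "(\<Sum>i<n. c i * X i \<omega>)\<^sup>2 = (\<Sum>i<n. \<Sum>j<n. c i * c j * (X i \<omega> * X j \<omega>))" for \<omega>
    by (simp add: power2_eq_square sum_product mult_ac)
  have "expectation (\<lambda>\<omega>. (\<Sum>i<n. c i * X i \<omega>)\<^sup>2)
      = (\<Sum>i<n. expectation (\<lambda>\<omega>. \<Sum>j<n. c i * c j * (X i \<omega> * X j \<omega>)))"
    unfolding square
    by (rule Bochner_Integration.integral_sum) (use assms in \<open>auto intro!: integrable_sum\<close>)
  also have "\<dots> = (\<Sum>i<n. \<Sum>j<n. c i * c j * expectation (\<lambda>\<omega>. X i \<omega> * X j \<omega>))"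
    using assms by (intro sum.cong refl, subst Bochner_Integration.integral_sum) auto
  finally show ?thesis .
qed

lemma (in prob_space) centered_gaussian_vector_distr_eq:
  assumes X: "centered_gaussian_vector M L X" and X': "centered_gaussian_vector M L X'"
    and covariance: "\<And>i j. i < L \<Longrightarrow> j < L \<Longrightarrow>
      expectation (\<lambda>\<omega>. X i \<omega> * X j \<omega>) = expectation (\<lambda>\<omega>. X' i \<omega> * X' j \<omega>)"
  shows "distr M (\<Pi>\<^sub>M i\<in>{..<L}. lborel) (\<lambda>\<omega>. \<lambda>i\<in>{..<L}. X i \<omega>)
       = distr M (\<Pi>\<^sub>M i\<in>{..<L}. lborel) (\<lambda>\<omega>. \<lambda>i\<in>{..<L}. X' i \<omega>)"
proof (rule cramer_wold)
  fix c :: "nat \<Rightarrow> real"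
  have "expectation (\<lambda>\<omega>. (\<Sum>i<L. c i * X i \<omega>)\<^sup>2) = expectation (\<lambda>\<omega>. (\<Sum>i<L. c i * X' i \<omega>)\<^sup>2)"
    using centered_gaussian_vector_integrable_mult[OF X] centered_gaussian_vector_integrable_mult[OF X']
    by (simp add: expectation_lincomb_square covariance)
  then show "distr M lborel (\<lambda>\<omega>. \<Sum>i<L. c i * X i \<omega>) = distr M lborel (\<lambda>\<omega>. \<Sum>i<L. c i * X' i \<omega>)"
    by (intro centered_normal_or_zero_distr_eq centered_gaussian_vector_lincomb X X')
qed (use centered_gaussian_vector_measurable X X' in auto)

lemma centered_gaussian_vector_add_multiple:
  assumes X: "centered_gaussian_vector M L X" and l: "l < L"
  shows "centered_gaussian_vector M L (\<lambda>r \<omega>. X r \<omega> + b r * X l \<omega>)"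
  unfolding centered_gaussian_vector_def Let_def
proof (intro conjI allI impI)
  show "(\<lambda>\<omega>. X i \<omega> + b i * X l \<omega>) \<in> borel_measurable M" if "i < L" for i
    using centered_gaussian_vector_measurable[OF X] that l by measurable
  fix c :: "nat \<Rightarrow> real"
  define d where "d i = c i + (if i = l then \<Sum>r<L. c r * b r else 0)" for i
  have "(\<Sum>r<L. c r * (X r \<omega> + b r * X l \<omega>)) = (\<Sum>i<L. c i * X i \<omega>) + (\<Sum>r<L. c r * b r) * X l \<omega>"
    for \<omega> by (simp add: distrib_left sum.distrib sum_distrib_left sum_distrib_right mult_ac)
  also have "\<dots> \<omega> = (\<Sum>i<L. d i * X i \<omega>)" for \<omega>
    using l by (simp add: d_def distrib_right sum.distrib if_distrib[of "\<lambda>x. x * _"] cong: if_cong)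
  finally show "(AE \<omega> in M. (\<Sum>r<L. c r * (X r \<omega> + b r * X l \<omega>)) = 0) \<or>
      (\<exists>\<sigma>>0. distributed M lborel (\<lambda>\<omega>. \<Sum>r<L. c r * (X r \<omega> + b r * X l \<omega>))
        (\<lambda>x. ennreal (normal_density 0 \<sigma> x)))"
    using centered_gaussian_vector_lincomb[OF X, of d] unfolding centered_normal_or_zero_def by simp
qed

lemma (in prob_space) centered_gaussian_vector_reflection_distr:
  assumes X: "centered_gaussian_vector M L X" and l: "l < L"
    and unit: "expectation (\<lambda>\<omega>. (X l \<omega>)\<^sup>2) = 1"
  shows "distr M (\<Pi>\<^sub>M i\<in>{..<L}. lborel) (\<lambda>\<omega>. \<lambda>i\<in>{..<L}. X i \<omega>)
       = distr M (\<Pi>\<^sub>M i\<in>{..<L}. lborel)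
           (\<lambda>\<omega>. \<lambda>i\<in>{..<L}. X i \<omega> - 2 * expectation (\<lambda>\<omega>. X i \<omega> * X l \<omega>) * X l \<omega>)"
proof -
  define \<rho> where "\<rho> i = expectation (\<lambda>\<omega>. X i \<omega> * X l \<omega>)" for i
  have X': "centered_gaussian_vector M L (\<lambda>i \<omega>. X i \<omega> - 2 * \<rho> i * X l \<omega>)"
    using centered_gaussian_vector_add_multiple[OF X l, of "\<lambda>i. - 2 * \<rho> i"] by simp
  have "expectation (\<lambda>\<omega>. X i \<omega> * X j \<omega>)
      = expectation (\<lambda>\<omega>. (X i \<omega> - 2 * \<rho> i * X l \<omega>) * (X j \<omega> - 2 * \<rho> j * X l \<omega>))"
    if "i < L" "j < L" for i j
  proof -
    have "(\<lambda>\<omega>. (X i \<omega> - 2 * \<rho> i * X l \<omega>) * (X j \<omega> - 2 * \<rho> j * X l \<omega>))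
        = (\<lambda>\<omega>. X i \<omega> * X j \<omega> - 2 * \<rho> j * (X i \<omega> * X l \<omega>) - 2 * \<rho> i * (X j \<omega> * X l \<omega>)
            + 4 * \<rho> i * \<rho> j * (X l \<omega>)\<^sup>2)"
      by (simp add: fun_eq_iff power2_eq_square algebra_simps)
    moreover have "integrable M (\<lambda>\<omega>. X i \<omega> * X j \<omega>)" "integrable M (\<lambda>\<omega>. X i \<omega> * X l \<omega>)"
      "integrable M (\<lambda>\<omega>. X j \<omega> * X l \<omega>)" "integrable M (\<lambda>\<omega>. (X l \<omega>)\<^sup>2)"
      using centered_gaussian_vector_integrable_mult[OF X] that l by (simp_all add: power2_eq_square)
    ultimately show ?thesis
      using unit by (simp add: \<rho>_def)
  qed
  then show ?thesis
    using centered_gaussian_vector_distr_eq[OF X X'] by (simp add: \<rho>_def)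
qed

section \<open>The softmax weights\<close>

lemma softmax_nonneg: "0 \<le> softmax L \<beta> l x"
  unfolding softmax_def by (simp add: sum_nonneg)

lemma softmax_le_one:
  assumes "l < L"
  shows "softmax L \<beta> l x \<le> 1"
proof -
  have le: "exp (\<beta> * x l) \<le> (\<Sum>r<L. exp (\<beta> * x r))"
    using assms by (intro member_le_sum) auto
  then show ?thesis
    using order_less_le_trans[OF exp_gt_zero le] unfolding softmax_def by (simp add: divide_le_eq_1)
qed

lemma softmax_cong:
  assumes "l < L" "\<And>r. r < L \<Longrightarrow> x r = y r"
  shows "softmax L \<beta> l x = softmax L \<beta> l y"
  using assms unfolding softmax_def by (metis (no_types, lifting) lessThan_iff sum.cong)

lemma borel_measurable_softmax:
  assumes "l < L" and x: "\<And>i. i < L \<Longrightarrow> (\<lambda>\<omega>. x \<omega> i) \<in> borel_measurable M"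
  shows "(\<lambda>\<omega>. softmax L \<beta> l (x \<omega>)) \<in> borel_measurable M"
proof -
  have [measurable]: "(\<lambda>\<omega>. x \<omega> l) \<in> borel_measurable M"
    using x assms(1) .
  have [measurable]: "(\<lambda>\<omega>. \<Sum>r<L. exp (\<beta> * x \<omega> r)) \<in> borel_measurable M"
    using x by (intro borel_measurable_sum) auto
  show ?thesis
    unfolding softmax_def by measurable
qed

lemma integrable_mult_softmax:
  fixes Y :: "'a \<Rightarrow> real"
  assumes Y: "integrable M Y" and l: "l < L"
    and W: "\<And>i. i < L \<Longrightarrow> (\<lambda>\<omega>. W \<omega> i) \<in> borel_measurable M"
  shows "integrable M (\<lambda>\<omega>. Y \<omega> * softmax L \<beta> l (W \<omega>))"
proof (rule Bochner_Integration.integrable_bound[OF Y])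
  show "(\<lambda>\<omega>. Y \<omega> * softmax L \<beta> l (W \<omega>)) \<in> borel_measurable M"
    using borel_measurable_softmax[OF l W] Y by measurable
  show "AE \<omega> in M. norm (Y \<omega> * softmax L \<beta> l (W \<omega>)) \<le> norm (Y \<omega>)"
    using softmax_nonneg softmax_le_one[OF l] by (intro AE_I2) (simp add: abs_mult mult_left_le)
qed

lemma softmax_eq_inverse_sum_exp:
  "softmax L \<beta> l x = 1 / (\<Sum>r<L. exp (\<beta> * (x r - x l)))"
  unfolding softmax_def by (simp add: right_diff_distrib exp_diff sum_divide_distrib[symmetric])

lemma softmax_antimono:
  assumes "l < L" "0 \<le> \<beta>" and le: "\<And>r. r < L \<Longrightarrow> x r - x l \<le> y r - y l"
  shows "softmax L \<beta> l y \<le> softmax L \<beta> l x"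
proof -
  have "(\<Sum>r<L. exp (\<beta> * (x r - x l))) \<le> (\<Sum>r<L. exp (\<beta> * (y r - y l)))"
    using le assms(2) by (intro sum_mono) (simp add: mult_left_mono)
  moreover have "0 < (\<Sum>r<L. exp (\<beta> * (x r - x l)))"
    using assms(1) by (intro sum_pos) auto
  ultimately show ?thesis
    unfolding softmax_eq_inverse_sum_exp by (intro divide_left_mono) auto
qed

lemma softmax_strict_antimono:
  assumes "l < L" "0 < \<beta>" and le: "\<And>r. r < L \<Longrightarrow> x r - x l \<le> y r - y l"
    and "r < L" "x r - x l < y r - y l"
  shows "softmax L \<beta> l y < softmax L \<beta> l x"
proof -
  have "(\<Sum>r<L. exp (\<beta> * (x r - x l))) < (\<Sum>r<L. exp (\<beta> * (y r - y l)))"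
    using assms by (intro sum_strict_mono_ex1) (auto simp: mult_left_mono)
  moreover have "0 < (\<Sum>r<L. exp (\<beta> * (x r - x l)))"
    using assms(1) by (intro sum_pos) auto
  ultimately show ?thesis
    unfolding softmax_eq_inverse_sum_exp by (intro divide_strict_left_mono) auto
qed

lemma softmax_reflection_gap_nonneg:
  assumes l: "l < L" and \<beta>: "0 \<le> \<beta>" and \<rho>_l: "\<rho> l = 1" and \<rho>_le: "\<And>r. r < L \<Longrightarrow> \<rho> r \<le> 1"
  shows "0 \<le> x l * (softmax L \<beta> l x - softmax L \<beta> l (\<lambda>r. x r - 2 * \<rho> r * x l))"
proof -
  define y where "y r = x r - 2 * \<rho> r * x l" for r
  have shift: "y r - y l = (x r - x l) + 2 * (1 - \<rho> r) * x l" for r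
    using \<rho>_l by (simp add: y_def algebra_simps)
  show ?thesis
  proof (cases "0 \<le> x l")
    case True
    then have "softmax L \<beta> l y \<le> softmax L \<beta> l x"
      using l \<beta> \<rho>_le by (intro softmax_antimono) (simp_all add: shift)
    then show ?thesis
      using True unfolding y_def by simp
  next
    case False
    then have "softmax L \<beta> l x \<le> softmax L \<beta> l y"
      using l \<beta> \<rho>_le by (intro softmax_antimono) (simp_all add: shift mult_nonneg_nonpos)
    then show ?thesis
      using False unfolding y_def by (simp add: mult_nonpos_nonpos)
  qed
qed

lemma softmax_reflection_gap_pos:
  assumes l: "l < L" and \<beta>: "0 < \<beta>" and \<rho>_l: "\<rho> l = 1" and \<rho>_le: "\<And>r. r < L \<Longrightarrow> \<rho> r \<le> 1"
    and r: "r < L" "\<rho> r < 1" and x: "x l \<noteq> 0"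
  shows "0 < x l * (softmax L \<beta> l x - softmax L \<beta> l (\<lambda>r. x r - 2 * \<rho> r * x l))"
proof -
  define y where "y r = x r - 2 * \<rho> r * x l" for r
  have shift: "y r - y l = (x r - x l) + 2 * (1 - \<rho> r) * x l" for r
    using \<rho>_l by (simp add: y_def algebra_simps)
  show ?thesis
  proof (cases "0 < x l")
    case True
    then have "softmax L \<beta> l y < softmax L \<beta> l x"
      using l \<beta> \<rho>_le r by (intro softmax_strict_antimono[of l L \<beta> x y r]) (simp_all add: shift)
    then show ?thesis
      using True unfolding y_def by simp
  next
    case False
    then have "x l < 0" using x by simp
    then have "softmax L \<beta> l x < softmax L \<beta> l y"
      using l \<beta> \<rho>_le r
      by (intro softmax_strict_antimono[of l L \<beta> y x r]) (simp_all add: shift mult_nonneg_nonpos mult_pos_neg)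
    then show ?thesis
      using \<open>x l < 0\<close> unfolding y_def by (simp add: mult_neg_neg)
  qed
qed

section \<open>The reflection argument\<close>

lemma (in prob_space) centered_gaussian_vector_expectation_mult_softmax_reflect:
  assumes X: "centered_gaussian_vector M L X" and l: "l < L"
    and unit: "expectation (\<lambda>\<omega>. (X l \<omega>)\<^sup>2) = 1"
  shows "expectation (\<lambda>\<omega>. X l \<omega> * softmax L \<beta> l (\<lambda>i. X i \<omega>))
       = - expectation (\<lambda>\<omega>. X l \<omega> *
           softmax L \<beta> l (\<lambda>i. X i \<omega> - 2 * expectation (\<lambda>\<omega>. X i \<omega> * X l \<omega>) * X l \<omega>))"
proof -
  have [measurable]: "X i \<in> borel_measurable M" if "i < L" for i
    using centered_gaussian_vector_measurable[OF X that] .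
  define X' where "X' i \<omega> = X i \<omega> - 2 * expectation (\<lambda>\<omega>. X i \<omega> * X l \<omega>) * X l \<omega>" for i \<omega>
  have X'_l: "X' l \<omega> = - X l \<omega>" for \<omega>
    using unit by (simp add: X'_def power2_eq_square)
  define F where "F x = x l * softmax L \<beta> l x" for x
  have F_restrict: "F (\<lambda>i\<in>{..<L}. W i \<omega>) = W l \<omega> * softmax L \<beta> l (\<lambda>i. W i \<omega>)"
    for W :: "nat \<Rightarrow> 'a \<Rightarrow> real" and \<omega>
    unfolding F_def using l by (auto intro: softmax_cong)
  have F_measurable: "F \<in> borel_measurable (\<Pi>\<^sub>M i\<in>{..<L}. lborel)"
    unfolding F_def using l
    by (intro borel_measurable_times borel_measurable_softmax measurable_component_singleton) auto
  have vector_measurable: "(\<lambda>\<omega>. \<lambda>i\<in>{..<L}. X i \<omega>) \<in> M \<rightarrow>\<^sub>M (\<Pi>\<^sub>M i\<in>{..<L}. lborel)"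
    "(\<lambda>\<omega>. \<lambda>i\<in>{..<L}. X' i \<omega>) \<in> M \<rightarrow>\<^sub>M (\<Pi>\<^sub>M i\<in>{..<L}. lborel)"
    unfolding X'_def using l by (auto intro!: measurable_restrict)
  have "distr M (\<Pi>\<^sub>M i\<in>{..<L}. lborel) (\<lambda>\<omega>. \<lambda>i\<in>{..<L}. X i \<omega>)
      = distr M (\<Pi>\<^sub>M i\<in>{..<L}. lborel) (\<lambda>\<omega>. \<lambda>i\<in>{..<L}. X' i \<omega>)"
    using centered_gaussian_vector_reflection_distr[OF X l unit] unfolding X'_def .
  then have "expectation (\<lambda>\<omega>. F (\<lambda>i\<in>{..<L}. X i \<omega>)) = expectation (\<lambda>\<omega>. F (\<lambda>i\<in>{..<L}. X' i \<omega>))"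
    using vector_measurable F_measurable by (rule integral_comp_eq_if_distr_eq)
  then show ?thesis
    unfolding F_restrict X'_l by (simp add: X'_def)
qed

lemma (in prob_space) centered_gaussian_vector_expectation_mult_softmax:
  assumes X: "centered_gaussian_vector M L X"
    and unit: "\<And>i. i < L \<Longrightarrow> expectation (\<lambda>\<omega>. (X i \<omega>)\<^sup>2) = 1"
    and l: "l < L" and \<beta>: "0 < \<beta>"
  shows "0 \<le> expectation (\<lambda>\<omega>. X l \<omega> * softmax L \<beta> l (\<lambda>i. X i \<omega>))"
    and "r < L \<Longrightarrow> expectation (\<lambda>\<omega>. X r \<omega> * X l \<omega>) < 1 \<Longrightarrow>
      0 < expectation (\<lambda>\<omega>. X l \<omega> * softmax L \<beta> l (\<lambda>i. X i \<omega>))"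
proof -
  have [measurable]: "X i \<in> borel_measurable M" if "i < L" for i
    using centered_gaussian_vector_measurable[OF X that] .
  have square_integrable: "integrable M (\<lambda>\<omega>. (X i \<omega>)\<^sup>2)" if "i < L" for i
    using centered_normal_or_zero_integrable_square[OF centered_gaussian_vector_component[OF X that]] .
  define \<rho> where "\<rho> i = expectation (\<lambda>\<omega>. X i \<omega> * X l \<omega>)" for i
  have \<rho>_l: "\<rho> l = 1"
    using unit[OF l] by (simp add: \<rho>_def power2_eq_square)
  have \<rho>_le: "\<rho> r \<le> 1" if "r < L" for r
    using expectation_mult_le_average_squares[of "X r" "X l"] square_integrable unit that l
    by (simp add: \<rho>_def)
  define gap where "gap \<omega> = X l \<omega> * (softmax L \<beta> l (\<lambda>i. X i \<omega>)
      - softmax L \<beta> l (\<lambda>i. X i \<omega> - 2 * \<rho> i * X l \<omega>))" for \<omega>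
  have integrable_gap: "integrable M gap"
    and expectation_gap: "expectation gap = 2 * expectation (\<lambda>\<omega>. X l \<omega> * softmax L \<beta> l (\<lambda>i. X i \<omega>))"
  proof -
    have "integrable M (X l)"
      using square_integrable[OF l] by (rule square_integrable_imp_integrable[rotated]) (use l in simp)
    then have "integrable M (\<lambda>\<omega>. X l \<omega> * softmax L \<beta> l (\<lambda>i. X i \<omega>))"
      "integrable M (\<lambda>\<omega>. X l \<omega> * softmax L \<beta> l (\<lambda>i. X i \<omega> - 2 * \<rho> i * X l \<omega>))"
      using l by (auto intro!: integrable_mult_softmax)
    then show "integrable M gap" "expectation gap = 2 * expectation (\<lambda>\<omega>. X l \<omega> * softmax L \<beta> l (\<lambda>i. X i \<omega>))"
      using centered_gaussian_vector_expectation_mult_softmax_reflect[OF X l unit[OF l], of \<beta>]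
      unfolding gap_def[abs_def] right_diff_distrib \<rho>_def by simp_all
  qed
  have gap_nonneg: "0 \<le> gap \<omega>" for \<omega>
    unfolding gap_def using l \<beta> \<rho>_l \<rho>_le by (intro softmax_reflection_gap_nonneg) auto
  then show "0 \<le> expectation (\<lambda>\<omega>. X l \<omega> * softmax L \<beta> l (\<lambda>i. X i \<omega>))"
    using expectation_gap Bochner_Integration.integral_nonneg[of M gap] by simp
  assume r: "r < L" "expectation (\<lambda>\<omega>. X r \<omega> * X l \<omega>) < 1"
  then have \<rho>_r: "\<rho> r < 1"
    by (simp add: \<rho>_def)
  have gap_pos: "0 < gap \<omega>" if "X l \<omega> \<noteq> 0" for \<omega>
    unfolding gap_def
    by (rule softmax_reflection_gap_pos[where x = "\<lambda>i. X i \<omega>", OF l \<beta> \<rho>_l \<rho>_le r(1) \<rho>_r that])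
  have "AE \<omega> in M. X l \<omega> \<noteq> 0"
    using centered_normal_or_zero_AE_nonzero[OF centered_gaussian_vector_component[OF X l]] unit[OF l] by simp
  then have "AE \<omega> in M. 0 < gap \<omega>"
    by (rule eventually_mono) (rule gap_pos)
  then show "0 < expectation (\<lambda>\<omega>. X l \<omega> * softmax L \<beta> l (\<lambda>i. X i \<omega>))"
    using expectation_pos_if_AE_pos[OF integrable_gap gap_nonneg] expectation_gap by simp
qed

theorem proposition5:
  fixes M :: "'a measure" and L :: nat and X :: "nat \<Rightarrow> 'a \<Rightarrow> real"
  assumes "prob_space M"
    and "L \<ge> 2"
    and "centered_gaussian_vector M L X"
    and "\<forall>i<L. prob_space.expectation M (\<lambda>\<omega>. (X i \<omega>)\<^sup>2) = 1"
  shows "(\<forall>l<L. \<forall>\<beta>>0.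
           prob_space.expectation M (\<lambda>\<omega>. X l \<omega> * softmax L \<beta> l (\<lambda>i. X i \<omega>)) \<ge> 0) \<and>
         ((\<forall>i<L. \<forall>j<L. i \<noteq> j \<longrightarrow> prob_space.expectation M (\<lambda>\<omega>. X i \<omega> * X j \<omega>) < 1) \<longrightarrow>
         (\<forall>l<L. \<forall>\<beta>>0.
           prob_space.expectation M (\<lambda>\<omega>. X l \<omega> * softmax L \<beta> l (\<lambda>i. X i \<omega>)) > 0))"
proof -
  interpret prob_space M by fact
  note softmax_moment = centered_gaussian_vector_expectation_mult_softmax[OF assms(3)]
  show ?thesis
  proof (intro conjI allI impI)
    fix l and \<beta> :: real
    assume "l < L" "0 < \<beta>"
    then show "0 \<le> expectation (\<lambda>\<omega>. X l \<omega> * softmax L \<beta> l (\<lambda>i. X i \<omega>))"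
      using assms(4) by (intro softmax_moment(1)) auto
  next
    fix l and \<beta> :: real
    assume off_diagonal: "\<forall>i<L. \<forall>j<L. i \<noteq> j \<longrightarrow> expectation (\<lambda>\<omega>. X i \<omega> * X j \<omega>) < 1"
      and "l < L" "0 < \<beta>"
    define r where "r = (if l = 0 then 1 else 0 :: nat)"
    have "r < L" "r \<noteq> l"
      using assms(2) by (auto simp: r_def)
    with off_diagonal \<open>l < L\<close> have "expectation (\<lambda>\<omega>. X r \<omega> * X l \<omega>) < 1"
      by blast
    with \<open>r < L\<close> \<open>l < L\<close> \<open>0 < \<beta>\<close>
    show "0 < expectation (\<lambda>\<omega>. X l \<omega> * softmax L \<beta> l (\<lambda>i. X i \<omega>))"
      using assms(4) by (intro softmax_moment(2)[where r = r]) auto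
  qed
qed

end
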